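(* Let $M\in\Gamma$ be a monitor, $N$ a malicious node, and $P$ an honest inbound peer of $N$ (i.e. $(P,N)\in E$). If $M$ executes $PeeV(N)$ and $N$ forwards the marker it receives from $M$ to $P$, then when $PeeV(N)$ ends, $P\notin L_N^M$.
   Context: The network is a directed graph $G=(V,E)$ of nodes; $(X,Y)\in E$ means $X$ has an outbound connection to $Y$, so $Y$ is an outbound peer of $X$ and $X$ is an inbound peer of $Y$. $\Gamma$ is a set of legitimate monitors, each connected to every node. A marker is a triple $[N,M,r]$ (target, monitor, random value). $PeeV(N)$, run by $M$: start with empty $L_N^M$; draw random $r$; send $[N,M,r]$ to $N$; until a timeout, whenever a marker equal to $[N,M,r]$ is received from a node $P$, add $P$ to $L_N^M$; then output $L_N^M$. An honest node $X$ processes every received marker with $HandleMarker(pfrom,[N,M,r])$: if $pfrom=M\in\Gamma$, forward the marker to all outbound peers of $X$; if $pfrom=N$ and $N$ is an inbound peer of $X$, send the marker to $M$; otherwise do nothing. A malicious node may deviate arbitrarily from these rules. *)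

theory Defs
  imports Main
begin

text \<open>Participants (nodes and monitors) have type 'a; random values have type 'r.
  A marker [N,M,r] is the triple (N, M, r).  A send event (s, d, m) means that
  participant s sends marker m to participant d (and d receives it from s;
  channels are authenticated, so the receiver learns the true sender).
  An execution is the list of send events in chronological order, truncated at the timeout.\<close>

type_synonym ('a,'r) marker = "'a \<times> 'a \<times> 'r"
type_synonym ('a,'r) event = "'a \<times> 'a \<times> ('a,'r) marker"

definition mtarget :: "('a,'r) marker \<Rightarrow> 'a" where "mtarget m = fst m"
definition mmonitor :: "('a,'r) marker \<Rightarrow> 'a" where "mmonitor m = fst (snd m)"

definition network :: "'a set \<Rightarrow> ('a \<times> 'a) set \<Rightarrow> 'a set \<Rightarrow> bool" where
  "network V E \<Gamma> \<longleftrightarrow> E \<subseteq> V \<times> V \<and> (\<forall>X Y. (X,Y) \<in> E \<longrightarrow> (Y,X) \<notin> E) \<and> V \<inter> \<Gamma> = {}"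

definition handle_marker_sends :: "('a \<times> 'a) set \<Rightarrow> 'a set \<Rightarrow> 'a \<Rightarrow> 'a \<Rightarrow> ('a,'r) marker \<Rightarrow> 'a \<Rightarrow> bool" where
  "handle_marker_sends E \<Gamma> X pfrom m d \<longleftrightarrow>
     (pfrom = mmonitor m \<and> pfrom \<in> \<Gamma> \<and> (X, d) \<in> E)
   \<or> (\<not> (pfrom = mmonitor m \<and> pfrom \<in> \<Gamma>) \<and> pfrom = mtarget m \<and> (pfrom, X) \<in> E \<and> d = mmonitor m)"

text \<open>Admissible executions: legitimate monitors only send PeeV markers [X,M',r'] (with themselves
  as monitor) to the target X; every send of an honest node is produced by HandleMarker on a marker
  it received earlier; malicious nodes (Mal) send arbitrary markers.\<close>
definition valid_run :: "'a set \<Rightarrow> ('a \<times> 'a) set \<Rightarrow> 'a set \<Rightarrow> 'a set \<Rightarrow> ('a,'r) event list \<Rightarrow> bool" where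
  "valid_run V E \<Gamma> Mal evs \<longleftrightarrow>
    (\<forall>i < length evs.
       (let s = fst (evs ! i); d = fst (snd (evs ! i)); m = snd (snd (evs ! i)) in
         s \<in> V \<union> \<Gamma> \<and> d \<in> V \<union> \<Gamma>
       \<and> (s \<in> \<Gamma> \<longrightarrow> mmonitor m = s \<and> mtarget m = d \<and> d \<in> V)
       \<and> (s \<in> V - Mal \<longrightarrow>
            (\<exists>j < i. fst (snd (evs ! j)) = s \<and> snd (snd (evs ! j)) = m
                    \<and> handle_marker_sends E \<Gamma> s (fst (evs ! j)) m d))))"

definition peev_list :: "'a \<Rightarrow> 'a \<Rightarrow> 'r \<Rightarrow> ('a,'r) event list \<Rightarrow> 'a set" where
  "peev_list M N r evs = {P. (P, M, (N, M, r)) \<in> set evs}"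

end

theory Submission
  imports Defs
begin

text \<open>An honest node returns a marker to its monitor only after receiving it from the target,
  and only if the target is one of its inbound peers. Since a connection has a single direction,
  the honest inbound peer P of N is an outbound peer of N, so P never returns [N,M,r] to M.\<close>

lemma handle_marker_sends_to_monitor_iff:
  assumes "network V E \<Gamma>" and "mmonitor m \<in> \<Gamma>"
  shows "handle_marker_sends E \<Gamma> X pfrom m (mmonitor m) \<longleftrightarrow> pfrom = mtarget m \<and> (pfrom, X) \<in> E"
  using assms by (auto simp: handle_marker_sends_def network_def)

lemma valid_run_honest_send_handled:
  assumes "valid_run V E \<Gamma> Mal evs" and "k < length evs" and "evs ! k = (s, d, m)"
    and "s \<in> V - Mal"
  shows "\<exists>j < k. \<exists>p. evs ! j = (p, s, m) \<and> handle_marker_sends E \<Gamma> s p m d"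
proof -
  from assms obtain j where "j < k" "fst (snd (evs ! j)) = s" "snd (snd (evs ! j)) = m"
      and "handle_marker_sends E \<Gamma> s (fst (evs ! j)) m d"
    unfolding valid_run_def Let_def by fastforce
  moreover have "evs ! j = (fst (evs ! j), s, m)"
    using \<open>fst (snd (evs ! j)) = s\<close> \<open>snd (snd (evs ! j)) = m\<close> by (cases "evs ! j") simp
  ultimately show ?thesis by blast
qed

lemma valid_run_honest_returns_marker_from_inbound_target:
  assumes "network V E \<Gamma>" and "valid_run V E \<Gamma> Mal evs"
    and "X \<in> V - Mal" and "mmonitor m \<in> \<Gamma>" and "(X, mmonitor m, m) \<in> set evs"
  shows "(mtarget m, X) \<in> E"
proof -
  from assms(5) obtain k where "k < length evs" "evs ! k = (X, mmonitor m, m)"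
    by (meson in_set_conv_nth)
  then obtain p where "handle_marker_sends E \<Gamma> X p m (mmonitor m)"
    using valid_run_honest_send_handled[OF assms(2) _ _ assms(3)] by blast
  then show ?thesis
    using handle_marker_sends_to_monitor_iff[OF assms(1,4)] by metis
qed

theorem lemma1:
  fixes V :: "'a set" and E :: "('a \<times> 'a) set" and \<Gamma> Mal :: "'a set"
    and M N P :: 'a and r :: 'r and evs :: "('a,'r) event list"
  assumes "network V E \<Gamma>"
    and "Mal \<subseteq> V"
    and "M \<in> \<Gamma>"
    and "N \<in> Mal"
    and "P \<in> V" and "P \<notin> Mal"
    and "(P, N) \<in> E"
    and "valid_run V E \<Gamma> Mal evs"
    and "\<exists>i j. i < j \<and> j < length evs \<and> evs ! i = (M, N, (N, M, r)) \<and> evs ! j = (N, P, (N, M, r))"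
  shows "P \<notin> peev_list M N r evs"
proof
  assume "P \<in> peev_list M N r evs"
  then have "(P, mmonitor (N, M, r), (N, M, r)) \<in> set evs"
    by (simp add: peev_list_def mmonitor_def)
  moreover have "P \<in> V - Mal" and "mmonitor (N, M, r) \<in> \<Gamma>"
    using assms(3,5,6) by (auto simp: mmonitor_def)
  ultimately have "(mtarget (N, M, r), P) \<in> E"
    using valid_run_honest_returns_marker_from_inbound_target[OF assms(1,8)] by blast
  then have "(N, P) \<in> E" by (simp add: mtarget_def)
  with assms(1,7) show False by (auto simp: network_def)
qed

end
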